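(* Consider the two-type economy with abundant machines. 1. Fix a type $k\in\{A,B\}$ with knowledge $\boldsymbol h^k=(h^k_1,h^k_2)$. If $F(1,h^k_2)\ge F(h^k_1,1)$, let $\boldsymbol v^k=(1,0)$ and $\Delta_k=F(1,h^k_2)/c-1+c\,(1-F(\boldsymbol h^k))$; otherwise let $\boldsymbol v^k=(0,1)$ and $\Delta_k=F(h^k_1,1)/c-1+c\,(1-F(\boldsymbol h^k))$. If $\Delta_k\ge0$, then the type-$k$ equilibrium wage is maximized over $\boldsymbol m\in[0,1]^2$ at $\boldsymbol m=\boldsymbol v^k$ (AI as poor as possible in the dimension where type $k$ is strongest and as good as possible in the other); if $\Delta_k<0$, it is maximized at $\boldsymbol m=(1,1)$. Here "maximized at $\boldsymbol m_0$" means: for every $\boldsymbol m\in[0,1]^2$, every equilibrium at $\boldsymbol m$ and every equilibrium at $\boldsymbol m_0$, the type-$k$ wage at $\boldsymbol m$ is at most the type-$k$ wage at $\boldsymbol m_0$. 2. The machine knowledge maximizing total labor income $w^*=\phi^Aw^A+\phi^Bw^B$ need not be a vertex of $[0,1]^2$: there exist parameters $(F,c,\phi^A,\boldsymbol h^A,\boldsymbol h^B)$ of the two-type economy for which no vertex of $[0,1]^2$ maximizes $w^*$ over $[0,1]^2$.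
   Context: Two-type economy. Fix a cumulative distribution function $F$ on $[0,1]^2$ with a density $f$ that has full support on $[0,1]^2$ and $c\in(0,1)$. There is a mass $\phi^A\in(0,1)$ of type-$A$ humans with knowledge $\boldsymbol h^A\in(0,1)^2$, a mass $\phi^B=1-\phi^A$ of type-$B$ humans with knowledge $\boldsymbol h^B\in(0,1)^2$, and a mass $\mu>0$ of machines with knowledge $\boldsymbol m\in[0,1]^2$; every agent has one unit of time. Write $\boldsymbol x\vee\boldsymbol y$ for the componentwise maximum and, for $F(\boldsymbol x)<1$, $n(\boldsymbol x)=\frac1{c(1-F(\boldsymbol x))}$. Given wages $w^A,w^B\ge0$ and rental $r\ge0$, the firm types and profits are: single-layer non-automated of type $k$ (one type-$k$ human) $F(\boldsymbol h^k)-w^k$; single-layer automated $F(\boldsymbol m)-r$; bottom-automated of type $k$ (one type-$k$ solver, $n(\boldsymbol m)$ machine workers; available when $F(\boldsymbol m)<1$) $n(\boldsymbol m)[F(\boldsymbol m\vee\boldsymbol h^k)-r]-w^k$; top-automated of type $k$ (one machine solver, $n(\boldsymbol h^k)$ type-$k$ workers) $n(\boldsymbol h^k)[F(\boldsymbol m\vee\boldsymbol h^k)-w^k]-r$; $BA$ firm (one type-$B$ solver, $n(\boldsymbol h^A)$ type-$A$ workers) $n(\boldsymbol h^A)[F(\boldsymbol h^A\vee\boldsymbol h^B)-w^A]-w^B$; $AB$ firm (one type-$A$ solver, $n(\boldsymbol h^B)$ type-$B$ workers) $n(\boldsymbol h^B)[F(\boldsymbol h^A\vee\boldsymbol h^B)-w^B]-w^A$.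 A feasible allocation assigns nonnegative masses of type-$A$ humans, type-$B$ humans and machines to these firm types, in the per-firm proportions just listed, so that all humans of each type and all machines are employed. An equilibrium is a feasible allocation with prices $(w^A,w^B,r)\ge0$ such that all firm types have nonpositive profit and types used with positive mass earn zero profit. Abundance: $\mu>\max_{k\in\{A,B\}}\max\Big\{\frac1{c(1-F(1,h^k_2))},\frac1{c(1-F(h^k_1,1))}\Big\}$. Total labor income $w^*=\phi^Aw^A+\phi^Bw^B$ is the same in every equilibrium at a given $\boldsymbol m$. *)

theory Defs
  imports "HOL-Analysis.Analysis"
begin

datatype htype = TA | TB

definition unit_sq :: "(real \<times> real) set" where
  "unit_sq = {x. 0 \<le> fst x \<and> fst x \<le> 1 \<and> 0 \<le> snd x \<and> snd x \<le> 1}"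

definition open_unit_sq :: "(real \<times> real) set" where
  "open_unit_sq = {x. 0 < fst x \<and> fst x < 1 \<and> 0 < snd x \<and> snd x < 1}"

text \<open>F is the CDF on [0,1]^2 of a density f with full support on [0,1]^2.\<close>
definition cdf_with_density :: "(real \<times> real \<Rightarrow> real) \<Rightarrow> (real \<times> real \<Rightarrow> real) \<Rightarrow> bool" where
  "cdf_with_density F f \<longleftrightarrow>
     (\<forall>x\<in>unit_sq. 0 \<le> f x) \<and>
     (\<forall>x\<in>unit_sq. (f has_integral F x) (cbox (0,0) x)) \<and>
     F (1,1) = 1 \<and>
     (\<forall>a\<in>unit_sq. \<forall>b\<in>unit_sq. fst a < fst b \<longrightarrow> snd a < snd b \<longrightarrow>
        integral (cbox a b) f > 0)"

definition vmax :: "real \<times> real \<Rightarrow> real \<times> real \<Rightarrow> real \<times> real" where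
  "vmax x y = (max (fst x) (fst y), max (snd x) (snd y))"

definition nspan :: "(real \<times> real \<Rightarrow> real) \<Rightarrow> real \<Rightarrow> real \<times> real \<Rightarrow> real" where
  "nspan F c x = 1 / (c * (1 - F x))"

definition phi :: "real \<Rightarrow> htype \<Rightarrow> real" where
  "phi phiA k = (if k = TA then phiA else 1 - phiA)"

datatype firm = SLH htype | SLM | Bot htype | Top htype | BA | AB

definition all_firms :: "firm list" where
  "all_firms = [SLH TA, SLH TB, SLM, Bot TA, Bot TB, Top TA, Top TB, BA, AB]"

definition hum_req :: "(real \<times> real \<Rightarrow> real) \<Rightarrow> real \<Rightarrow> (htype \<Rightarrow> real \<times> real)
     \<Rightarrow> firm \<Rightarrow> htype \<Rightarrow> real" where
  "hum_req F c h j k = (case j of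
      SLH k' \<Rightarrow> (if k = k' then 1 else 0)
    | SLM \<Rightarrow> 0
    | Bot k' \<Rightarrow> (if k = k' then 1 else 0)
    | Top k' \<Rightarrow> (if k = k' then nspan F c (h k') else 0)
    | BA \<Rightarrow> (if k = TA then nspan F c (h TA) else 1)
    | AB \<Rightarrow> (if k = TB then nspan F c (h TB) else 1))"

definition mach_req :: "(real \<times> real \<Rightarrow> real) \<Rightarrow> real \<Rightarrow> real \<times> real \<Rightarrow> firm \<Rightarrow> real" where
  "mach_req F c m j = (case j of
      SLH _ \<Rightarrow> 0
    | SLM \<Rightarrow> 1
    | Bot _ \<Rightarrow> nspan F c m
    | Top _ \<Rightarrow> 1
    | BA \<Rightarrow> 0
    | AB \<Rightarrow> 0)"

definition available :: "(real \<times> real \<Rightarrow> real) \<Rightarrow> real \<times> real \<Rightarrow> firm \<Rightarrow> bool" where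
  "available F m j = (case j of Bot _ \<Rightarrow> F m < 1 | _ \<Rightarrow> True)"

definition profit :: "(real \<times> real \<Rightarrow> real) \<Rightarrow> real \<Rightarrow> (htype \<Rightarrow> real \<times> real) \<Rightarrow> real \<times> real
     \<Rightarrow> (htype \<Rightarrow> real) \<Rightarrow> real \<Rightarrow> firm \<Rightarrow> real" where
  "profit F c h m w r j = (case j of
      SLH k \<Rightarrow> F (h k) - w k
    | SLM \<Rightarrow> F m - r
    | Bot k \<Rightarrow> nspan F c m * (F (vmax m (h k)) - r) - w k
    | Top k \<Rightarrow> nspan F c (h k) * (F (vmax m (h k)) - w k) - r
    | BA \<Rightarrow> nspan F c (h TA) * (F (vmax (h TA) (h TB)) - w TA) - w TB
    | AB \<Rightarrow> nspan F c (h TB) * (F (vmax (h TA) (h TB)) - w TB) - w TA)"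

text \<open>An equilibrium at machine knowledge m: q gives the mass of firms of each type.\<close>
definition equilibrium ::
  "(real \<times> real \<Rightarrow> real) \<Rightarrow> real \<Rightarrow> real \<Rightarrow> (htype \<Rightarrow> real \<times> real) \<Rightarrow> real \<Rightarrow> real \<times> real
   \<Rightarrow> (firm \<Rightarrow> real) \<Rightarrow> (htype \<Rightarrow> real) \<Rightarrow> real \<Rightarrow> bool" where
  "equilibrium F c phiA h mu m q w r \<longleftrightarrow>
     (\<forall>j. 0 \<le> q j) \<and>
     (\<forall>j. \<not> available F m j \<longrightarrow> q j = 0) \<and>
     (\<forall>k. sum_list (map (\<lambda>j. q j * hum_req F c h j k) all_firms) = phi phiA k) \<and>
     sum_list (map (\<lambda>j. q j * mach_req F c m j) all_firms) = mu \<and>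
     (\<forall>k. 0 \<le> w k) \<and> 0 \<le> r \<and>
     (\<forall>j. available F m j \<longrightarrow> profit F c h m w r j \<le> 0) \<and>
     (\<forall>j. available F m j \<longrightarrow> 0 < q j \<longrightarrow> profit F c h m w r j = 0)"

definition two_type_economy ::
  "(real \<times> real \<Rightarrow> real) \<Rightarrow> (real \<times> real \<Rightarrow> real) \<Rightarrow> real \<Rightarrow> real \<Rightarrow> (htype \<Rightarrow> real \<times> real) \<Rightarrow> real \<Rightarrow> bool" where
  "two_type_economy F f c phiA h mu \<longleftrightarrow>
     cdf_with_density F f \<and> 0 < c \<and> c < 1 \<and> 0 < phiA \<and> phiA < 1 \<and>
     (\<forall>k. h k \<in> open_unit_sq) \<and> 0 < mu"

definition abundant :: "(real \<times> real \<Rightarrow> real) \<Rightarrow> real \<Rightarrow> (htype \<Rightarrow> real \<times> real) \<Rightarrow> real \<Rightarrow> bool" where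
  "abundant F c h mu \<longleftrightarrow>
     (\<forall>k. mu > nspan F c (1, snd (h k)) \<and> mu > nspan F c (fst (h k), 1))"

definition total_labor_income :: "real \<Rightarrow> (htype \<Rightarrow> real) \<Rightarrow> real" where
  "total_labor_income phiA w = phiA * w TA + (1 - phiA) * w TB"

definition wage_maximized_at ::
  "(real \<times> real \<Rightarrow> real) \<Rightarrow> real \<Rightarrow> real \<Rightarrow> (htype \<Rightarrow> real \<times> real) \<Rightarrow> real \<Rightarrow> htype \<Rightarrow> real \<times> real \<Rightarrow> bool" where
  "wage_maximized_at F c phiA h mu k m0 \<longleftrightarrow>
     (\<forall>m\<in>unit_sq. \<forall>q w r q0 w0 r0.
        equilibrium F c phiA h mu m q w r \<longrightarrow> equilibrium F c phiA h mu m0 q0 w0 r0 \<longrightarrow>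
        w k \<le> w0 k)"

definition income_maximized_at ::
  "(real \<times> real \<Rightarrow> real) \<Rightarrow> real \<Rightarrow> real \<Rightarrow> (htype \<Rightarrow> real \<times> real) \<Rightarrow> real \<Rightarrow> real \<times> real \<Rightarrow> bool" where
  "income_maximized_at F c phiA h mu m0 \<longleftrightarrow>
     (\<forall>m\<in>unit_sq. \<forall>q w r q0 w0 r0.
        equilibrium F c phiA h mu m q w r \<longrightarrow> equilibrium F c phiA h mu m0 q0 w0 r0 \<longrightarrow>
        total_labor_income phiA w \<le> total_labor_income phiA w0)"

definition vertices :: "(real \<times> real) set" where
  "vertices = {(0,0), (1,0), (0,1), (1,1)}"

definition strong_dir :: "(real \<times> real \<Rightarrow> real) \<Rightarrow> real \<times> real \<Rightarrow> real \<times> real" where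
  "strong_dir F hk = (if F (1, snd hk) \<ge> F (fst hk, 1) then (1,0) else (0,1))"

definition Delta :: "(real \<times> real \<Rightarrow> real) \<Rightarrow> real \<Rightarrow> real \<times> real \<Rightarrow> real" where
  "Delta F c hk = (if F (1, snd hk) \<ge> F (fst hk, 1)
                   then F (1, snd hk) / c - 1 + c * (1 - F hk)
                   else F (fst hk, 1) / c - 1 + c * (1 - F hk))"

end

theory Submission
  imports Defs
begin

text \<open>
  In every equilibrium the wage of a type with knowledge x is at most
  max (best_complement F x / c) (1 - c (1 - F x)): whichever firm employs the type, zero profit
  together with the outside options (a human earns at least its single-layer output, a machine
  at least its single-layer output F m) caps the wage by one of the two terms.
  With abundant machines the rental is exactly F m, for otherwise no machine sits in a
  single-layer firm while every other firm uses fewer than mu machines per human, so the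
  machines could not all be employed. At the strong direction v machines are therefore free and
  F v = 0, so a bottom-automated firm forces the wage up to F (vmax v x) / c = best_complement F x / c;
  at (1,1) the rental is 1 and a top-automated firm forces it up to 1 - c (1 - F x).
  Delta is the difference of the two terms, so the bound is attained at the point it predicts.
  For the second part, a uniform economy has an equilibrium at (1, 3/5) whose labor income
  exceeds that of equilibria at all four vertices.
\<close>

section \<open>Distribution functions with a density\<close>

lemma cdf_has_integral:
  "cdf_with_density F f \<Longrightarrow> x \<in> unit_sq \<Longrightarrow> (f has_integral F x) (cbox (0,0) x)"
  by (simp add: cdf_with_density_def)

lemma cbox_subset_unit_sq: "x \<in> unit_sq \<Longrightarrow> cbox (0,0) x \<subseteq> unit_sq"
  by (cases x) (auto simp: unit_sq_def cbox_Pair_eq)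

lemma cdf_plus_box_integral_le_1:
  assumes cdf: "cdf_with_density F f" and x: "x \<in> unit_sq" and y: "y \<in> unit_sq"
    and neg: "negligible (cbox (0,0) x \<inter> cbox y (1,1))"
  shows "F x + integral (cbox y (1,1)) f \<le> 1"
proof -
  have one: "(f has_integral 1) (cbox (0,0) (1,1))"
    using cdf_has_integral[OF cdf, of "(1,1)"] cdf by (simp add: unit_sq_def cdf_with_density_def)
  have "f integrable_on cbox y (1,1)"
    by (rule integrable_on_subcbox[OF has_integral_integrable[OF one]])
       (use y in \<open>cases y, auto simp: unit_sq_def cbox_Pair_eq\<close>)
  then have "(f has_integral F x + integral (cbox y (1,1)) f) (cbox (0,0) x \<union> cbox y (1,1))"
    using has_integral_Un[OF cdf_has_integral[OF cdf x] _ neg] by (simp add: integrable_integral)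
  moreover have "cbox (0,0) x \<union> cbox y (1,1) \<subseteq> cbox (0,0) (1,1)"
    using x y by (cases x, cases y) (auto simp: unit_sq_def cbox_Pair_eq)
  moreover have "\<forall>z\<in>cbox (0,0) (1,1). 0 \<le> f z"
    using cdf by (auto simp: cdf_with_density_def unit_sq_def cbox_Pair_eq)
  ultimately show ?thesis using has_integral_subset_le one by blast
qed

lemma cdf_less_1:
  assumes cdf: "cdf_with_density F f" and x: "x \<in> unit_sq" and "fst x < 1 \<or> snd x < 1"
  shows "F x < 1"
proof -
  obtain a b where ab: "x = (a,b)" by fastforce
  have "\<exists>y\<in>unit_sq. fst y < 1 \<and> snd y < 1 \<and> negligible (cbox (0,0) x \<inter> cbox y (1,1))"
  proof (cases "a < 1")
    case True
    have "cbox (0,0) x \<inter> cbox (a,0) (1,1) = cbox (a,0) (a,b)"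
      using x ab by (auto simp: unit_sq_def cbox_Pair_eq)
    then show ?thesis
      using x ab True by (intro bexI[of _ "(a,0)"])
        (auto simp: negligible_interval unit_sq_def box_eq_empty Basis_prod_def)
  next
    case False
    then have b: "b < 1" using assms ab by auto
    have "cbox (0,0) x \<inter> cbox (0,b) (1,1) = cbox (0,b) (a,b)"
      using x ab by (auto simp: unit_sq_def cbox_Pair_eq)
    then show ?thesis
      using x ab b by (intro bexI[of _ "(0,b)"])
        (auto simp: negligible_interval unit_sq_def box_eq_empty Basis_prod_def)
  qed
  then obtain y where y: "y \<in> unit_sq" "fst y < 1" "snd y < 1"
    and neg: "negligible (cbox (0,0) x \<inter> cbox y (1,1))" by blast
  have "0 < integral (cbox y (1,1)) f"
    using cdf y unfolding cdf_with_density_def by (force simp: unit_sq_def)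
  with cdf_plus_box_integral_le_1[OF cdf x y(1) neg] show ?thesis by linarith
qed

lemma cdf_eq_0_on_axes:
  assumes cdf: "cdf_with_density F f" and x: "x \<in> unit_sq" and "fst x = 0 \<or> snd x = 0"
  shows "F x = 0"
proof -
  have "(f has_integral 0) (cbox (0,0) x)"
    by (rule has_integral_null) (use assms in \<open>cases x, auto simp: content_Pair\<close>)
  with cdf_has_integral[OF cdf x] show ?thesis using has_integral_unique by blast
qed

lemma cdf_mono:
  assumes cdf: "cdf_with_density F f" and x: "x \<in> unit_sq" and y: "y \<in> unit_sq"
    and "fst x \<le> fst y" "snd x \<le> snd y"
  shows "F x \<le> F y"
proof (rule has_integral_subset_le)
  show "cbox (0,0) x \<subseteq> cbox (0,0) y"
    using assms by (cases x, cases y) (auto simp: unit_sq_def cbox_Pair_eq)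
  show "\<forall>z\<in>cbox (0,0) y. 0 \<le> f z"
    using cdf cbox_subset_unit_sq[OF y] by (auto simp: cdf_with_density_def)
qed (use cdf_has_integral[OF cdf] x y in auto)

lemma cdf_nonneg: "cdf_with_density F f \<Longrightarrow> x \<in> unit_sq \<Longrightarrow> 0 \<le> F x"
  using cdf_mono[of F f "(0,0)" x] cdf_eq_0_on_axes[of F f "(0,0)"] by (auto simp: unit_sq_def)

lemma cdf_le_1: "cdf_with_density F f \<Longrightarrow> x \<in> unit_sq \<Longrightarrow> F x \<le> 1"
  using cdf_mono[of F f x "(1,1)"] by (auto simp: unit_sq_def cdf_with_density_def)

section \<open>Wage bounds from zero profit\<close>

definition best_complement :: "(real \<times> real \<Rightarrow> real) \<Rightarrow> real \<times> real \<Rightarrow> real" where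
  "best_complement F x = max (F (1, snd x)) (F (fst x, 1))"

definition wage_bound :: "(real \<times> real \<Rightarrow> real) \<Rightarrow> real \<Rightarrow> real \<times> real \<Rightarrow> real" where
  "wage_bound F c x = max (best_complement F x / c) (1 - c * (1 - F x))"

lemma vmax_commute: "vmax x y = vmax y x"
  by (simp add: vmax_def max.commute)

lemma vmax_eq_left: "fst y \<le> fst x \<Longrightarrow> snd y \<le> snd x \<Longrightarrow> vmax x y = x"
  by (cases x) (simp add: vmax_def max_def)

lemma vmax_in_unit_sq: "x \<in> unit_sq \<Longrightarrow> y \<in> unit_sq \<Longrightarrow> vmax x y \<in> unit_sq"
  by (auto simp: vmax_def unit_sq_def)

lemma open_unit_sq_subset: "open_unit_sq \<subseteq> unit_sq"
  by (auto simp: open_unit_sq_def unit_sq_def)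

lemma cdf_vmax_le_best_complement:
  assumes cdf: "cdf_with_density F f" and x: "x \<in> unit_sq" and y: "y \<in> unit_sq"
    and not_le: "\<not> (fst x \<le> fst y \<and> snd x \<le> snd y)"
  shows "F (vmax y x) \<le> best_complement F x"
proof (cases "fst y < fst x")
  case True
  then have "F (vmax y x) \<le> F (fst x, 1)"
    using x y by (intro cdf_mono[OF cdf vmax_in_unit_sq[OF y x]]) (auto simp: vmax_def unit_sq_def)
  then show ?thesis by (simp add: best_complement_def)
next
  case False
  then have "F (vmax y x) \<le> F (1, snd x)"
    using x y not_le
    by (intro cdf_mono[OF cdf vmax_in_unit_sq[OF y x]]) (auto simp: vmax_def unit_sq_def)
  then show ?thesis by (simp add: best_complement_def)
qed

lemma cdf_le_best_complement:
  assumes "cdf_with_density F f" "x \<in> unit_sq"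
  shows "F x \<le> best_complement F x"
  using cdf_mono[OF assms, of "(fst x, 1)"] assms(2) by (auto simp: best_complement_def unit_sq_def)

lemma best_complement_le_wage_bound:
  assumes "cdf_with_density F f" "x \<in> unit_sq" "0 < c" "c \<le> 1"
  shows "best_complement F x \<le> wage_bound F c x"
proof -
  have "0 \<le> best_complement F x"
    using cdf_le_best_complement[OF assms(1,2)] cdf_nonneg[OF assms(1,2)] by linarith
  then have "best_complement F x \<le> best_complement F x / c"
    using assms(3,4) by (simp add: le_divide_eq mult_left_le)
  then show ?thesis by (simp add: wage_bound_def)
qed

lemma worker_wage_le_wage_bound:
  assumes cdf: "cdf_with_density F f" and c: "0 < c" "c \<le> 1"
    and x: "x \<in> unit_sq" "F x < 1" and y: "y \<in> unit_sq" and s: "F y \<le> s"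
    and zero_profit: "nspan F c x * (F (vmax y x) - w) - s = 0"
  shows "w \<le> wage_bound F c x"
proof -
  define e where "e = c * (1 - F x)"
  have e: "0 < e" "e \<le> 1"
    using c x cdf_nonneg[OF cdf x(1)] by (auto simp: e_def mult_le_one)
  have w: "w = F (vmax y x) - s * e"
    using zero_profit e unfolding nspan_def e_def[symmetric] by (simp add: field_simps)
  have "F y * e \<le> s * e" using s e by simp
  show ?thesis
  proof (cases "fst x \<le> fst y \<and> snd x \<le> snd y")
    case True
    then have "w \<le> F y * (1 - e)"
      using w \<open>F y * e \<le> s * e\<close> by (simp add: vmax_eq_left algebra_simps)
    also have "\<dots> \<le> 1 - e"
      using e cdf_nonneg[OF cdf y] cdf_le_1[OF cdf y] by (simp add: mult_left_le_one_le)
    finally show ?thesis by (simp add: wage_bound_def e_def)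
  next
    case False
    have "0 \<le> s * e" using \<open>F y * e \<le> s * e\<close> cdf_nonneg[OF cdf y] e by simp
    then have "w \<le> best_complement F x"
      using w cdf_vmax_le_best_complement[OF cdf x(1) y False] by linarith
    then show ?thesis using best_complement_le_wage_bound[OF cdf x(1) c] by linarith
  qed
qed

lemma solver_wage_le_wage_bound:
  assumes cdf: "cdf_with_density F f" and c: "0 < c" "c \<le> 1"
    and x: "x \<in> unit_sq" and y: "y \<in> unit_sq" "F y < 1" and s: "F y \<le> s"
    and zero_profit: "nspan F c y * (F (vmax y x) - s) - w = 0"
  shows "w \<le> wage_bound F c x"
proof -
  define e where "e = c * (1 - F y)"
  have e: "0 < e" using c y by (simp add: e_def)
  have w: "w = (F (vmax y x) - s) / e"
    using zero_profit unfolding nspan_def e_def[symmetric] by simp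
  show ?thesis
  proof (cases "fst x \<le> fst y \<and> snd x \<le> snd y")
    case True
    then have "w \<le> 0"
      using w s e by (simp add: vmax_eq_left divide_nonpos_pos)
    moreover have "0 \<le> wage_bound F c x"
      using best_complement_le_wage_bound[OF cdf x c] cdf_le_best_complement[OF cdf x]
        cdf_nonneg[OF cdf x] by linarith
    ultimately show ?thesis by linarith
  next
    case False
    define G where "G = F (vmax y x)"
    have "0 \<le> G" "G \<le> 1"
      using vmax_in_unit_sq[OF y(1) x] cdf_nonneg[OF cdf] cdf_le_1[OF cdf] by (simp_all add: G_def)
    then have "G - s \<le> G * (1 - F y)"
      using s cdf_nonneg[OF cdf y(1)] mult_left_le_one_le[of "F y" G] by (simp add: algebra_simps)
    then have "w \<le> G * (1 - F y) / e"
      using w e by (simp add: G_def divide_right_mono)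
    also have "\<dots> = G / c"
      using c y(2) by (simp add: e_def)
    also have "\<dots> \<le> best_complement F x / c"
      using cdf_vmax_le_best_complement[OF cdf x y(1) False] c by (simp add: G_def divide_right_mono)
    finally show ?thesis by (simp add: wage_bound_def)
  qed
qed

lemma two_type_economyD:
  assumes "two_type_economy F f c phiA h mu"
  shows "cdf_with_density F f" "0 < c" "c < 1" "0 < phiA" "phiA < 1" "0 < mu"
  using assms by (auto simp: two_type_economy_def)

lemma two_type_economy_knowledge:
  assumes "two_type_economy F f c phiA h mu"
  shows "h k \<in> unit_sq" "F (h k) < 1"
proof -
  note cdf = two_type_economyD(1)[OF assms]
  have h: "h k \<in> open_unit_sq" using assms by (simp add: two_type_economy_def)
  then show hk: "h k \<in> unit_sq" using open_unit_sq_subset by blast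
  show "F (h k) < 1" using cdf_less_1[OF cdf hk] h by (simp add: open_unit_sq_def)
qed

lemma equilibrium_profit_le_0:
  "equilibrium F c phiA h mu m q w r \<Longrightarrow> available F m j \<Longrightarrow> profit F c h m w r j \<le> 0"
  by (simp add: equilibrium_def)

lemma equilibrium_active_firm:
  "equilibrium F c phiA h mu m q w r \<Longrightarrow> 0 < q j \<Longrightarrow> available F m j \<and> profit F c h m w r j = 0"
  unfolding equilibrium_def by (metis less_irrefl)

lemma equilibrium_cdf_le_rental: "equilibrium F c phiA h mu m q w r \<Longrightarrow> F m \<le> r"
  using equilibrium_profit_le_0[of F c phiA h mu m q w r SLM] by (simp add: available_def profit_def)

lemma equilibrium_cdf_le_wage: "equilibrium F c phiA h mu m q w r \<Longrightarrow> F (h k) \<le> w k"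
  using equilibrium_profit_le_0[of F c phiA h mu m q w r "SLH k"] by (simp add: available_def profit_def)

lemma sum_list_all_firms: "sum_list (map g all_firms) = (\<Sum>j\<in>set all_firms. g j)"
  by (simp add: sum_list_distinct_conv_sum_set all_firms_def)

lemma active_firm_wage_le_wage_bound:
  assumes econ: "two_type_economy F f c phiA h mu" and m: "m \<in> unit_sq"
    and eq: "equilibrium F c phiA h mu m q w r" and active: "0 < q j"
    and employs: "hum_req F c h j k \<noteq> 0"
  shows "w k \<le> wage_bound F c (h k)"
proof -
  note e = two_type_economyD[OF econ]
  note hk = two_type_economy_knowledge(1)[OF econ] and Fhk = two_type_economy_knowledge(2)[OF econ]
  have c: "0 < c" "c \<le> 1" using e by auto
  have zero: "profit F c h m w r j = 0" and av: "available F m j"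
    using equilibrium_active_firm[OF eq active] by auto
  note worker = worker_wage_le_wage_bound[OF e(1) c]
  note solver = solver_wage_le_wage_bound[OF e(1) c]
  note rental = equilibrium_cdf_le_rental[OF eq]
  note wage = equilibrium_cdf_le_wage[OF eq]
  show ?thesis
  proof (cases j)
    case (SLH k')
    then have "w k = F (h k)" using zero employs by (simp add: hum_req_def profit_def split: if_splits)
    then show ?thesis
      using cdf_le_best_complement[OF e(1) hk[of k]]
        best_complement_le_wage_bound[OF e(1) hk[of k] c] by linarith
  next
    case SLM
    then show ?thesis using employs by (simp add: hum_req_def)
  next
    case (Bot k')
    then have "F m < 1" "nspan F c m * (F (vmax m (h k)) - r) - w k = 0"
      using zero employs av by (simp_all add: hum_req_def profit_def available_def split: if_splits)
    then show ?thesis using solver[OF hk m _ rental] by blast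
  next
    case (Top k')
    then show ?thesis
      using worker[OF hk Fhk m rental] zero employs
      by (simp add: hum_req_def profit_def split: if_splits)
  next
    case BA
    then have "nspan F c (h TA) * (F (vmax (h TB) (h TA)) - w TA) - w TB = 0"
      "nspan F c (h TA) * (F (vmax (h TA) (h TB)) - w TA) - w TB = 0"
      using zero by (simp_all add: profit_def vmax_commute)
    then have "w TA \<le> wage_bound F c (h TA)" "w TB \<le> wage_bound F c (h TB)"
      using worker[OF hk Fhk hk wage] solver[OF hk hk Fhk wage] by blast+
    then show ?thesis by (cases k) simp_all
  next
    case AB
    then have "nspan F c (h TB) * (F (vmax (h TA) (h TB)) - w TB) - w TA = 0"
      "nspan F c (h TB) * (F (vmax (h TB) (h TA)) - w TB) - w TA = 0"
      using zero by (simp_all add: profit_def vmax_commute)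
    then have "w TB \<le> wage_bound F c (h TB)" "w TA \<le> wage_bound F c (h TA)"
      using worker[OF hk Fhk hk wage] solver[OF hk hk Fhk wage] by blast+
    then show ?thesis by (cases k) simp_all
  qed
qed

lemma equilibrium_wage_le_wage_bound:
  assumes econ: "two_type_economy F f c phiA h mu" and m: "m \<in> unit_sq"
    and eq: "equilibrium F c phiA h mu m q w r"
  shows "w k \<le> wage_bound F c (h k)"
proof -
  have "(\<Sum>j\<in>set all_firms. q j * hum_req F c h j k) = phi phiA k"
    using eq by (simp add: equilibrium_def flip: sum_list_all_firms)
  also have "\<dots> \<noteq> 0" using two_type_economyD(4,5)[OF econ] by (simp add: phi_def)
  finally obtain j where "q j * hum_req F c h j k \<noteq> 0"
    using sum.not_neutral_contains_not_neutral by blast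
  moreover have "0 \<le> q j" using eq by (simp add: equilibrium_def)
  ultimately have "0 < q j" "hum_req F c h j k \<noteq> 0" by auto
  then show ?thesis by (rule active_firm_wage_le_wage_bound[OF econ m eq])
qed

section \<open>Abundant machines\<close>

lemma nspan_gt_1:
  assumes "0 < c" "c < 1" "0 \<le> F x" "F x < 1"
  shows "1 < nspan F c x"
proof -
  have "c * (1 - F x) \<le> c" using assms by (simp add: mult_left_le)
  then have "c * (1 - F x) < 1" using assms by linarith
  then show ?thesis using assms by (simp add: nspan_def)
qed

lemma nspan_mono: "0 < c \<Longrightarrow> F x \<le> F y \<Longrightarrow> F y < 1 \<Longrightarrow> nspan F c x \<le> nspan F c y"
  by (simp add: nspan_def frac_le mult_left_mono)

lemma hum_req_nonneg:
  assumes "two_type_economy F f c phiA h mu"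
  shows "0 \<le> hum_req F c h j k"
proof -
  have "0 \<le> nspan F c (h k')" for k'
    using two_type_economyD(2)[OF assms] two_type_economy_knowledge(2)[OF assms, of k']
    by (simp add: nspan_def)
  then show ?thesis by (cases j) (simp_all add: hum_req_def)
qed

lemma abundant_nspan_less:
  assumes econ: "two_type_economy F f c phiA h mu" and ab: "abundant F c h mu"
    and m: "m \<in> unit_sq" and not_le: "\<not> (fst (h k) \<le> fst m \<and> snd (h k) \<le> snd m)"
  shows "nspan F c m < mu"
proof -
  note e = two_type_economyD[OF econ]
  have "h k \<in> open_unit_sq" using econ by (simp add: two_type_economy_def)
  then have h: "0 < fst (h k)" "fst (h k) < 1" "0 < snd (h k)" "snd (h k) < 1"
    by (auto simp: open_unit_sq_def)
  obtain v where v: "v = (fst (h k), 1) \<or> v = (1, snd (h k))" "F m \<le> F v"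
  proof (cases "fst m < fst (h k)")
    case True
    have "F m \<le> F (fst (h k), 1)"
      by (rule cdf_mono[OF e(1) m]) (use True m h in \<open>auto simp: unit_sq_def\<close>)
    then show ?thesis using that by blast
  next
    case False
    have "F m \<le> F (1, snd (h k))"
      by (rule cdf_mono[OF e(1) m]) (use False not_le m h in \<open>auto simp: unit_sq_def\<close>)
    then show ?thesis using that by blast
  qed
  then have "v \<in> unit_sq" using h by (auto simp: unit_sq_def)
  then have "nspan F c m \<le> nspan F c v"
    using nspan_mono[OF e(2) v(2)] cdf_less_1[OF e(1)] v(1) h by auto
  also have "\<dots> < mu" using ab v(1) by (auto simp: abundant_def)
  finally show ?thesis .
qed

lemma abundant_gt_1:
  assumes econ: "two_type_economy F f c phiA h mu" and ab: "abundant F c h mu"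
  shows "1 < mu"
proof -
  note e = two_type_economyD[OF econ]
  have "h TA \<in> open_unit_sq" using econ by (simp add: two_type_economy_def)
  then have "(1, snd (h TA)) \<in> unit_sq" "snd (h TA) < 1"
    by (auto simp: open_unit_sq_def unit_sq_def)
  then have "1 < nspan F c (1, snd (h TA))"
    using nspan_gt_1[OF e(2,3)] cdf_nonneg[OF e(1)] cdf_less_1[OF e(1)] by simp
  also have "\<dots> < mu" using ab by (simp add: abundant_def)
  finally show ?thesis .
qed

lemma active_firm_machine_ratio:
  assumes econ: "two_type_economy F f c phiA h mu" and ab: "abundant F c h mu"
    and m: "m \<in> unit_sq" and eq: "equilibrium F c phiA h mu m q w r"
    and rental: "F m < r" and active: "0 < q j"
  shows "mach_req F c m j = 0 \<or> mach_req F c m j < mu * (hum_req F c h j TA + hum_req F c h j TB)"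
proof -
  note e = two_type_economyD[OF econ]
  have zero: "profit F c h m w r j = 0" and av: "available F m j"
    using equilibrium_active_firm[OF eq active] by auto
  show ?thesis
  proof (cases j)
    case SLM
    then show ?thesis using zero rental by (simp add: profit_def)
  next
    case (Bot k)
    have "0 \<le> w k" using eq by (simp add: equilibrium_def)
    then have "0 \<le> nspan F c m * (F (vmax m (h k)) - r)" using zero Bot by (simp add: profit_def)
    moreover have "0 < nspan F c m"
      using av Bot e(2) by (simp add: available_def nspan_def)
    ultimately have "F m < F (vmax m (h k))"
      using rental by (simp add: zero_le_mult_iff)
    then have "\<not> (fst (h k) \<le> fst m \<and> snd (h k) \<le> snd m)"
      by (auto simp: vmax_eq_left)
    then have "nspan F c m < mu" by (rule abundant_nspan_less[OF econ ab m])
    then show ?thesis using Bot by (cases k) (simp_all add: mach_req_def hum_req_def)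
  next
    case (Top k)
    have "1 < nspan F c (h k)"
      using nspan_gt_1[OF e(2,3)] cdf_nonneg[OF e(1)] two_type_economy_knowledge[OF econ] by simp
    then have "1 < mu * nspan F c (h k)"
      using abundant_gt_1[OF econ ab] by (simp add: less_1_mult)
    then show ?thesis using Top by (cases k) (simp_all add: mach_req_def hum_req_def)
  qed (simp_all add: mach_req_def)
qed

lemma equilibrium_rental_le_cdf:
  assumes econ: "two_type_economy F f c phiA h mu" and ab: "abundant F c h mu"
    and m: "m \<in> unit_sq" and eq: "equilibrium F c phiA h mu m q w r"
  shows "r \<le> F m"
proof (rule ccontr)
  assume "\<not> r \<le> F m"
  then have rental: "F m < r" by simp
  define A where "A = set all_firms"
  define used where "used j = q j * mach_req F c m j" for j
  define bound where "bound j = mu * (q j * hum_req F c h j TA + q j * hum_req F c h j TB)" for j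
  have q: "0 \<le> q j" for j using eq by (simp add: equilibrium_def)
  have mu: "0 < mu" using two_type_economyD(6)[OF econ] .
  have strict: "used j < bound j" if "0 < used j" for j
  proof -
    have "0 < q j" "mach_req F c m j \<noteq> 0"
      using that q[of j] by (auto simp: used_def zero_less_mult_iff)
    then have "mach_req F c m j < mu * (hum_req F c h j TA + hum_req F c h j TB)"
      using active_firm_machine_ratio[OF econ ab m eq rental] by blast
    then have "q j * mach_req F c m j < q j * (mu * (hum_req F c h j TA + hum_req F c h j TB))"
      using \<open>0 < q j\<close> by simp
    then show ?thesis by (simp add: used_def bound_def algebra_simps)
  qed
  have le: "used j \<le> bound j" for j
  proof (cases "0 < used j")
    case False
    have "0 \<le> bound j"
      using q[of j] mu hum_req_nonneg[OF econ] by (simp add: bound_def)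
    then show ?thesis using False by linarith
  qed (use strict in fastforce)
  have "sum used A = mu"
    using eq by (simp add: equilibrium_def used_def A_def flip: sum_list_all_firms)
  then obtain j where "j \<in> A" "0 < used j"
    using mu sum_nonpos[of A used] by (metis not_le)
  then have "sum used A < sum bound A"
    using le strict by (intro sum_strict_mono_ex1) (auto simp: A_def)
  also have "sum bound A = mu * (phi phiA TA + phi phiA TB)"
    using eq
    by (simp add: bound_def A_def equilibrium_def sum.distrib flip: sum_distrib_left sum_list_all_firms)
  also have "\<dots> = mu" by (simp add: phi_def)
  finally show False using \<open>sum used A = mu\<close> by simp
qed

lemma equilibrium_rental_eq_cdf:
  assumes "two_type_economy F f c phiA h mu" "abundant F c h mu"
    "m \<in> unit_sq" "equilibrium F c phiA h mu m q w r"
  shows "r = F m"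
  using equilibrium_rental_le_cdf[OF assms] equilibrium_cdf_le_rental[OF assms(4)] by simp

section \<open>The wage-maximizing machine knowledge\<close>

lemma strong_dir_in_unit_sq: "strong_dir F x \<in> unit_sq"
  by (simp add: strong_dir_def unit_sq_def)

lemma cdf_strong_dir: "cdf_with_density F f \<Longrightarrow> F (strong_dir F x) = 0"
  using cdf_eq_0_on_axes[OF _ strong_dir_in_unit_sq] by (simp add: strong_dir_def)

lemma cdf_vmax_strong_dir:
  "x \<in> unit_sq \<Longrightarrow> F (vmax (strong_dir F x) x) = best_complement F x"
  by (auto simp: strong_dir_def vmax_def best_complement_def unit_sq_def)

lemma equilibrium_wage_ge_at_null_machine:
  assumes econ: "two_type_economy F f c phiA h mu" and ab: "abundant F c h mu"
    and m: "m \<in> unit_sq" "F m = 0" and eq: "equilibrium F c phiA h mu m q w r"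
  shows "F (vmax m (h k)) / c \<le> w k"
proof -
  have "r = 0" using equilibrium_rental_eq_cdf[OF econ ab m(1) eq] m(2) by simp
  then show ?thesis
    using equilibrium_profit_le_0[OF eq, of "Bot k"] m(2)
    by (simp add: available_def profit_def nspan_def)
qed

lemma equilibrium_wage_ge_at_top_corner:
  assumes econ: "two_type_economy F f c phiA h mu" and ab: "abundant F c h mu"
    and eq: "equilibrium F c phiA h mu (1,1) q w r"
  shows "1 - c * (1 - F (h k)) \<le> w k"
proof -
  note e = two_type_economyD[OF econ]
  have F11: "F (1,1) = 1" using e(1) by (simp add: cdf_with_density_def)
  then have "r = 1" using equilibrium_rental_eq_cdf[OF econ ab _ eq] by (simp add: unit_sq_def)
  moreover have "vmax (1,1) (h k) = (1,1)"
    using two_type_economy_knowledge(1)[OF econ] by (simp add: vmax_eq_left unit_sq_def)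
  ultimately have "(1 - w k) / (c * (1 - F (h k))) \<le> 1"
    using equilibrium_profit_le_0[OF eq, of "Top k"] F11
    by (simp add: available_def profit_def nspan_def)
  moreover have "0 < c * (1 - F (h k))" using e(2) two_type_economy_knowledge(2)[OF econ] by simp
  ultimately show ?thesis by (simp add: divide_le_eq)
qed

lemma wage_bound_eq:
  "wage_bound F c x = (if 0 \<le> Delta F c x then best_complement F x / c else 1 - c * (1 - F x))"
  by (auto simp: wage_bound_def Delta_def best_complement_def)

lemma wage_maximized_at_strong_dir:
  assumes econ: "two_type_economy F f c phiA h mu" and ab: "abundant F c h mu"
    and Delta: "0 \<le> Delta F c (h k)"
  shows "wage_maximized_at F c phiA h mu k (strong_dir F (h k))"
  unfolding wage_maximized_at_def
proof (intro ballI allI impI)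
  fix m q w r q0 w0 r0
  assume m: "m \<in> unit_sq" and eq: "equilibrium F c phiA h mu m q w r"
    and eq0: "equilibrium F c phiA h mu (strong_dir F (h k)) q0 w0 r0"
  have "w k \<le> wage_bound F c (h k)" by (rule equilibrium_wage_le_wage_bound[OF econ m eq])
  also have "\<dots> = F (vmax (strong_dir F (h k)) (h k)) / c"
    using Delta two_type_economy_knowledge(1)[OF econ] by (simp add: wage_bound_eq cdf_vmax_strong_dir)
  also have "\<dots> \<le> w0 k"
    using equilibrium_wage_ge_at_null_machine[OF econ ab strong_dir_in_unit_sq _ eq0]
      cdf_strong_dir[OF two_type_economyD(1)[OF econ]] by blast
  finally show "w k \<le> w0 k" .
qed

lemma wage_maximized_at_top_corner:
  assumes econ: "two_type_economy F f c phiA h mu" and ab: "abundant F c h mu"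
    and Delta: "Delta F c (h k) < 0"
  shows "wage_maximized_at F c phiA h mu k (1,1)"
  unfolding wage_maximized_at_def
proof (intro ballI allI impI)
  fix m q w r q0 w0 r0
  assume m: "m \<in> unit_sq" and eq: "equilibrium F c phiA h mu m q w r"
    and eq0: "equilibrium F c phiA h mu (1,1) q0 w0 r0"
  have "w k \<le> wage_bound F c (h k)" by (rule equilibrium_wage_le_wage_bound[OF econ m eq])
  also have "\<dots> = 1 - c * (1 - F (h k))" using Delta by (simp add: wage_bound_eq)
  also have "\<dots> \<le> w0 k" by (rule equilibrium_wage_ge_at_top_corner[OF econ ab eq0])
  finally show "w k \<le> w0 k" .
qed

section \<open>An economy whose income maximizer is not a vertex\<close>

lemma all_htype: "(\<forall>k. P k) \<longleftrightarrow> P TA \<and> P TB"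
  by (metis htype.exhaust)

lemma all_firm: "(\<forall>j. P j) \<longleftrightarrow> P (SLH TA) \<and> P (SLH TB) \<and> P SLM \<and> P (Bot TA) \<and> P (Bot TB)
   \<and> P (Top TA) \<and> P (Top TB) \<and> P BA \<and> P AB"
proof (intro iffI allI)
  fix j
  assume "P (SLH TA) \<and> P (SLH TB) \<and> P SLM \<and> P (Bot TA) \<and> P (Bot TB)
    \<and> P (Top TA) \<and> P (Top TB) \<and> P BA \<and> P AB"
  then show "P j" by (cases j) (metis htype.exhaust)+
qed simp

definition uniform_cdf :: "real \<times> real \<Rightarrow> real" where
  "uniform_cdf x = fst x * snd x"

definition example_knowledge :: "htype \<Rightarrow> real \<times> real" where
  "example_knowledge k = (case k of TA \<Rightarrow> (1/5, 1/10) | TB \<Rightarrow> (1/5, 9/10))"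

lemma cdf_with_density_uniform: "cdf_with_density uniform_cdf (\<lambda>_. 1)"
  unfolding cdf_with_density_def
proof (intro conjI ballI impI)
  fix x :: "real \<times> real" assume "x \<in> unit_sq"
  then show "((\<lambda>_. 1) has_integral uniform_cdf x) (cbox (0,0) x)"
    using has_integral_const[of "1::real" "(0,0)" x]
    by (cases x) (simp add: content_Pair unit_sq_def uniform_cdf_def)
next
  fix a b :: "real \<times> real" assume "fst a < fst b" "snd a < snd b"
  then show "0 < integral (cbox a b) (\<lambda>_. 1::real)"
    by (cases a, cases b) (simp add: content_Pair)
qed (auto simp: uniform_cdf_def)

lemma example_economy:
  "0 < mu \<Longrightarrow> two_type_economy uniform_cdf (\<lambda>_. 1) (1/2) (3/4) example_knowledge mu"
  using cdf_with_density_uniform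
  by (simp add: two_type_economy_def all_htype example_knowledge_def open_unit_sq_def)

lemma example_abundant_iff: "abundant uniform_cdf (1/2) example_knowledge mu \<longleftrightarrow> 20 < mu"
  by (auto simp: abundant_def all_htype example_knowledge_def nspan_def uniform_cdf_def)

lemmas example_simps = equilibrium_def all_firm all_htype all_firms_def hum_req_def mach_req_def
  available_def profit_def nspan_def phi_def uniform_cdf_def example_knowledge_def vmax_def
  total_labor_income_def

text \<open>At (1, 3/5) type A works under machine solvers, type B solves for machine workers and the
  remaining machines run single-layer firms; the best vertex, (1,0), only reaches income 3/5.\<close>

lemma example_interior_equilibrium:
  assumes "20 < mu"
  shows "\<exists>q w r. equilibrium uniform_cdf (1/2) (3/4) example_knowledge mu (1, 3/5) q w r
    \<and> total_labor_income (3/4) w = 1209/2000"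
  using assms
  by (intro exI[of _ "\<lambda>j. case j of SLM \<Rightarrow> mu - 647/400 | Top TA \<Rightarrow> 147/400 | Bot TB \<Rightarrow> 1/4 | _ \<Rightarrow> 0"]
      exI[of _ "\<lambda>k. case k of TA \<Rightarrow> 153/500 | TB \<Rightarrow> 3/2"] exI[of _ "3/5"])
    (simp add: example_simps)

lemma example_vertex_equilibrium:
  assumes "20 < mu" and "v \<in> vertices"
  shows "\<exists>q w r. equilibrium uniform_cdf (1/2) (3/4) example_knowledge mu v q w r
    \<and> total_labor_income (3/4) w < 1209/2000"
proof -
  define q_bot :: "firm \<Rightarrow> real" where
    "q_bot j = (case j of SLM \<Rightarrow> mu - 2 | Bot TA \<Rightarrow> 3/4 | Bot TB \<Rightarrow> 1/4 | _ \<Rightarrow> 0)" for j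
  define q_top :: "firm \<Rightarrow> real" where
    "q_top j = (case j of SLM \<Rightarrow> mu - 47/100 | Top TA \<Rightarrow> 147/400 | Top TB \<Rightarrow> 41/400 | _ \<Rightarrow> 0)" for j
  define wage :: "real \<Rightarrow> real \<Rightarrow> htype \<Rightarrow> real" where
    "wage a b k = (case k of TA \<Rightarrow> a | TB \<Rightarrow> b)" for a b k
  from assms(2) consider "v = (0,0)" | "v = (1,0)" | "v = (0,1)" | "v = (1,1)"
    by (auto simp: vertices_def)
  then show ?thesis
  proof cases
    case 1
    show ?thesis using assms(1) unfolding 1
      by (intro exI[of _ q_bot] exI[of _ "wage (1/25) (9/25)"] exI[of _ 0])
        (simp add: example_simps q_bot_def wage_def)
  next
    case 2
    show ?thesis using assms(1) unfolding 2
      by (intro exI[of _ q_bot] exI[of _ "wage (1/5) (9/5)"] exI[of _ 0])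
        (simp add: example_simps q_bot_def wage_def)
  next
    case 3
    show ?thesis using assms(1) unfolding 3
      by (intro exI[of _ q_bot] exI[of _ "wage (2/5) (2/5)"] exI[of _ 0])
        (simp add: example_simps q_bot_def wage_def)
  next
    case 4
    show ?thesis using assms(1) unfolding 4
      by (intro exI[of _ q_top] exI[of _ "wage (51/100) (59/100)"] exI[of _ 1])
        (simp add: example_simps q_top_def wage_def)
  qed
qed

lemma income_maximizer_not_vertex_example:
  "\<exists>F f c phiA h. (\<exists>mu. two_type_economy F f c phiA h mu \<and> abundant F c h mu) \<and>
     (\<forall>mu. two_type_economy F f c phiA h mu \<and> abundant F c h mu \<longrightarrow>
        (\<forall>v\<in>vertices. \<not> income_maximized_at F c phiA h mu v))"
proof (rule exI[of _ uniform_cdf], rule exI[of _ "\<lambda>_. 1"], rule exI[of _ "1/2"], rule exI[of _ "3/4"],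
    rule exI[of _ example_knowledge], intro conjI allI impI ballI notI)
  show "\<exists>mu. two_type_economy uniform_cdf (\<lambda>_. 1 :: real) (1/2) (3/4) example_knowledge mu
      \<and> abundant uniform_cdf (1/2) example_knowledge mu"
    using example_economy example_abundant_iff by (intro exI[of _ 21]) simp
next
  fix mu v
  assume "two_type_economy uniform_cdf (\<lambda>_. 1 :: real) (1/2) (3/4) example_knowledge mu
      \<and> abundant uniform_cdf (1/2) example_knowledge mu"
    and v: "v \<in> vertices"
    and max: "income_maximized_at uniform_cdf (1/2) (3/4) example_knowledge mu v"
  then have mu: "20 < mu" using example_abundant_iff by blast
  obtain q w r where eq: "equilibrium uniform_cdf (1/2) (3/4) example_knowledge mu (1, 3/5) q w r"
    and "total_labor_income (3/4) w = 1209/2000"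
    using example_interior_equilibrium[OF mu] by blast
  moreover obtain q0 w0 r0
    where eq0: "equilibrium uniform_cdf (1/2) (3/4) example_knowledge mu v q0 w0 r0"
    and "total_labor_income (3/4) w0 < 1209/2000"
    using example_vertex_equilibrium[OF mu v] by blast
  moreover have "(1, 3/5) \<in> unit_sq" by (simp add: unit_sq_def)
  ultimately show False
    using max eq eq0 unfolding income_maximized_at_def by fastforce
qed

theorem proposition8:
  shows "(\<forall>F f c phiA h mu k.
            two_type_economy F f c phiA h mu \<and> abundant F c h mu \<longrightarrow>
            (Delta F c (h k) \<ge> 0 \<longrightarrow> wage_maximized_at F c phiA h mu k (strong_dir F (h k))) \<and>
            (Delta F c (h k) < 0 \<longrightarrow> wage_maximized_at F c phiA h mu k (1,1)))
       \<and> (\<exists>F f c phiA h. (\<exists>mu. two_type_economy F f c phiA h mu \<and> abundant F c h mu) \<and>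
            (\<forall>mu. two_type_economy F f c phiA h mu \<and> abundant F c h mu \<longrightarrow>
               (\<forall>v\<in>vertices. \<not> income_maximized_at F c phiA h mu v)))"
  using wage_maximized_at_strong_dir wage_maximized_at_top_corner income_maximizer_not_vertex_example
  by blast

end
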